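(* Let $(X,f)$ be a dynamical system and let $q_0:X\to Y_0$ and $q_1:X\to Y_1$ be quotient maps (continuous surjections onto compact Hausdorff spaces) such that $\ker(q_0)\sqsubseteq\ker(q_1)$. Then $\tilde h(X,f,q_0)\geq\tilde h(X,f,q_1)$.
   Context: A dynamical system is a pair $(X,f)$ with $X$ compact Hausdorff and $f:X\to X$ a continuous surjection. $\ker(q)$ denotes the equivalence relation (partition into fibers) induced by $q$ on $X$, and $\ker(q_0)\sqsubseteq\ker(q_1)$ means the partition of $q_0$ refines that of $q_1$ (every fiber of $q_0$ lies in a fiber of $q_1$). The quotient-topological entropy is $\tilde h(X,f,q)=\sup\{\mathrm{GR}_n(\#\bigvee_{i=0}^n f^{-i}(q^{-1}\mathcal U)):\mathcal U\text{ open cover of the target of } q\}$, where $\mathrm{GR}_t(x_t)=\limsup_{t\to\infty}\frac1t\ln x_t$, $\#\mathcal C$ is the minimal cardinality of a finite subcover of $\mathcal C$, and $\mathcal A\vee\mathcal B=\{A\cap B\}_{A\in\mathcal A,B\in\mathcal B}$. *)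

theory Defs
  imports "HOL-Analysis.Analysis"
begin

definition dyn_system :: "'a topology \<Rightarrow> ('a \<Rightarrow> 'a) \<Rightarrow> bool" where
  "dyn_system X f \<longleftrightarrow> compact_space X \<and> Hausdorff_space X \<and>
     continuous_map X X f \<and> f ` topspace X = topspace X"

definition cts_quotient :: "'a topology \<Rightarrow> 'b topology \<Rightarrow> ('a \<Rightarrow> 'b) \<Rightarrow> bool" where
  "cts_quotient X Y q \<longleftrightarrow> compact_space Y \<and> Hausdorff_space Y \<and>
     continuous_map X Y q \<and> q ` topspace X = topspace Y"

definition ker_refines :: "'a topology \<Rightarrow> ('a \<Rightarrow> 'b) \<Rightarrow> ('a \<Rightarrow> 'c) \<Rightarrow> bool" where
  "ker_refines X q0 q1 \<longleftrightarrow>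
     (\<forall>x\<in>topspace X. \<forall>y\<in>topspace X. q0 x = q0 y \<longrightarrow> q1 x = q1 y)"

definition open_cover :: "'b topology \<Rightarrow> 'b set set \<Rightarrow> bool" where
  "open_cover Y U \<longleftrightarrow> (\<forall>A\<in>U. openin Y A) \<and> \<Union>U = topspace Y"

definition preimage_cover :: "'a topology \<Rightarrow> ('a \<Rightarrow> 'b) \<Rightarrow> 'b set set \<Rightarrow> 'a set set" where
  "preimage_cover X q U = (\<lambda>A. {x \<in> topspace X. q x \<in> A}) ` U"

definition join_cover :: "'a set set \<Rightarrow> 'a set set \<Rightarrow> 'a set set" where
  "join_cover A B = {a \<inter> b | a b. a \<in> A \<and> b \<in> B}"

fun dyn_join :: "'a topology \<Rightarrow> ('a \<Rightarrow> 'a) \<Rightarrow> ('a \<Rightarrow> 'b) \<Rightarrow> 'b set set \<Rightarrow> nat \<Rightarrow> 'a set set" where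
  "dyn_join X f q U 0 = preimage_cover X q U"
| "dyn_join X f q U (Suc n) =
     join_cover (dyn_join X f q U n) (preimage_cover X (q \<circ> (f ^^ Suc n)) U)"

definition min_subcover_card :: "'a topology \<Rightarrow> 'a set set \<Rightarrow> nat" where
  "min_subcover_card X C = Inf {card D | D. D \<subseteq> C \<and> finite D \<and> \<Union>D = topspace X}"

definition growth_rate :: "(nat \<Rightarrow> real) \<Rightarrow> ereal" where
  "growth_rate x = limsup (\<lambda>t. ereal (ln (x t) / real t))"

definition qt_entropy :: "'a topology \<Rightarrow> ('a \<Rightarrow> 'a) \<Rightarrow> 'b topology \<Rightarrow> ('a \<Rightarrow> 'b) \<Rightarrow> ereal" where
  "qt_entropy X f Y q =
     (SUP U \<in> {U. open_cover Y U}.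
        growth_rate (\<lambda>n. real (min_subcover_card X (dyn_join X f q U n))))"

end

theory Submission
  imports Defs
begin

text \<open>Since \<open>q\<^sub>0\<close> is a closed, hence quotient, map and \<open>q\<^sub>1\<close> is constant on its fibres,
  \<open>q\<^sub>1\<close> factors as \<open>g \<circ> q\<^sub>0\<close> with \<open>g : Y\<^sub>0 \<rightarrow> Y\<^sub>1\<close> continuous. Pulling an open cover \<open>\<U>\<close>
  of \<open>Y\<^sub>1\<close> back along \<open>g\<close> gives an open cover of \<open>Y\<^sub>0\<close> whose dynamical joins under \<open>q\<^sub>0\<close>
  are literally those of \<open>\<U>\<close> under \<open>q\<^sub>1\<close>, so every growth rate in the supremum for
  \<open>q\<^sub>1\<close> already occurs in the supremum for \<open>q\<^sub>0\<close>.\<close>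

lemma continuous_map_funpow:
  assumes "continuous_map X X f"
  shows "continuous_map X X (f ^^ n)"
proof (induction n)
  case (Suc n)
  then show ?case
    using assms continuous_map_compose funpow_Suc_right by metis
qed simp

lemma cts_quotient_imp_quotient_map:
  assumes "compact_space X" and "cts_quotient X Y q"
  shows "quotient_map X Y q"
  using assms unfolding cts_quotient_def
  by (metis Hausdorff_imp_kc_space continuous_closed_imp_quotient_map continuous_imp_closed_map_gen)

lemma open_cover_preimage_cover:
  assumes "continuous_map X Y g" and "open_cover Y U"
  shows "open_cover X (preimage_cover X g U)"
  using assms unfolding open_cover_def preimage_cover_def
  by (auto intro: openin_continuous_map_preimage simp: continuous_map_def)

lemma preimage_cover_cong:
  assumes "\<And>x. x \<in> topspace X \<Longrightarrow> p x = p' x"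
  shows "preimage_cover X p U = preimage_cover X p' U"
  using assms unfolding preimage_cover_def by (metis (mono_tags, lifting) Collect_cong)

lemma preimage_cover_preimage_cover:
  assumes "p ` topspace X \<subseteq> topspace Y"
  shows "preimage_cover X p (preimage_cover Y g U) = preimage_cover X (g \<circ> p) U"
  using assms unfolding preimage_cover_def image_image by auto

lemma dyn_join_factor:
  assumes "continuous_map X X f" and "continuous_map X Y q"
    and factor: "\<And>x. x \<in> topspace X \<Longrightarrow> g (q x) = q' x"
  shows "dyn_join X f q (preimage_cover Y g U) n = dyn_join X f q' U n"
proof -
  have step: "preimage_cover X (q \<circ> (f ^^ k)) (preimage_cover Y g U)
      = preimage_cover X (q' \<circ> (f ^^ k)) U" for k
  proof -
    have "continuous_map X Y (q \<circ> (f ^^ k))"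
      using assms(1,2) continuous_map_compose continuous_map_funpow by blast
    then have "preimage_cover X (q \<circ> (f ^^ k)) (preimage_cover Y g U)
        = preimage_cover X (g \<circ> (q \<circ> (f ^^ k))) U"
      by (rule preimage_cover_preimage_cover[OF continuous_map_image_subset_topspace])
    also have "\<dots> = preimage_cover X (q' \<circ> (f ^^ k)) U"
    proof (rule preimage_cover_cong)
      fix x assume "x \<in> topspace X"
      then have "(f ^^ k) x \<in> topspace X"
        using continuous_map_image_subset_topspace[OF continuous_map_funpow[OF assms(1)]] by blast
      then show "(g \<circ> (q \<circ> (f ^^ k))) x = (q' \<circ> (f ^^ k)) x"
        by (simp add: factor)
    qed
    finally show ?thesis .
  qed
  show ?thesis
  proof (induction n)
    case 0
    show ?case using step[of 0] by simp
  next
    case (Suc n)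
    then show ?case using step[of "Suc n"] by simp
  qed
qed

lemma qt_entropy_le_of_factor:
  assumes "continuous_map X X f" and "continuous_map X Y q" and "continuous_map Y Y' g"
    and "\<And>x. x \<in> topspace X \<Longrightarrow> g (q x) = q' x"
  shows "qt_entropy X f Y' q' \<le> qt_entropy X f Y q"
  unfolding qt_entropy_def
proof (rule SUP_least)
  fix U assume "U \<in> {U. open_cover Y' U}"
  then have pulled_back: "preimage_cover Y g U \<in> {V. open_cover Y V}"
    using assms(3) open_cover_preimage_cover by blast
  have joins_eq: "dyn_join X f q (preimage_cover Y g U) n = dyn_join X f q' U n" for n
    using assms(1,2) by (rule dyn_join_factor) (rule assms(4))
  from pulled_back have "growth_rate (\<lambda>n. real (min_subcover_card X (dyn_join X f q (preimage_cover Y g U) n)))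
      \<le> (SUP V \<in> {V. open_cover Y V}. growth_rate (\<lambda>n. real (min_subcover_card X (dyn_join X f q V n))))"
    by (rule SUP_upper)
  then show "growth_rate (\<lambda>n. real (min_subcover_card X (dyn_join X f q' U n)))
      \<le> (SUP V \<in> {V. open_cover Y V}. growth_rate (\<lambda>n. real (min_subcover_card X (dyn_join X f q V n))))"
    unfolding joins_eq .
qed

theorem mainTheorem3:
  fixes X :: "'a topology" and Y0 :: "'b topology" and Y1 :: "'c topology"
    and f :: "'a \<Rightarrow> 'a" and q0 :: "'a \<Rightarrow> 'b" and q1 :: "'a \<Rightarrow> 'c"
  assumes "dyn_system X f"
    and "cts_quotient X Y0 q0"
    and "cts_quotient X Y1 q1"
    and "ker_refines X q0 q1"
  shows "qt_entropy X f Y0 q0 \<ge> qt_entropy X f Y1 q1"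
proof -
  have "compact_space X" and f: "continuous_map X X f"
    using assms(1) unfolding dyn_system_def by auto
  have q0: "quotient_map X Y0 q0"
    using \<open>compact_space X\<close> assms(2) by (rule cts_quotient_imp_quotient_map)
  have q1: "continuous_map X Y1 q1"
    using assms(3) unfolding cts_quotient_def by blast
  have fibres: "q1 x = q1 y" if "x \<in> topspace X" "y \<in> topspace X" "q0 x = q0 y" for x y
    using assms(4) that unfolding ker_refines_def by blast
  obtain g where g_cts: "continuous_map Y0 Y1 g" and "g ` topspace Y0 = q1 ` topspace X"
    and g_factor: "\<And>x. x \<in> topspace X \<Longrightarrow> g (q0 x) = q1 x"
    using quotient_map_lift_exists[OF q0 q1 fibres] by blast
  show ?thesis
    using f quotient_imp_continuous_map[OF q0] g_cts g_factor by (rule qt_entropy_le_of_factor)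
qed

end
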